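(* Let $x_1,x_2,x_3,x_4\in\mathbb{Z}^3$ be the vertices of a Fano tetrahedron, and let $\lambda_1,\ldots,\lambda_4$ be non-negative integers with $\gcd(\lambda_1,\ldots,\lambda_4)=1$ such that, with $h=\lambda_1+\cdots+\lambda_4$, $\sum_i\lambda_ix_i=0$ (so $\lambda_i/h$ are the barycentric coordinates of the origin). Then (i) $\sum_{i=1}^4\left\lceil\frac{\kappa\lambda_i}{h}\right\rceil=\kappa+2$ for all integers $\kappa\in\{2,\ldots,h-2\}$, and (ii) $\gcd(\lambda_i,h)=1$ for $i=1,\ldots,4$.
   Context: A tetrahedron is called Fano if its vertices lie in $\mathbb{Z}^3$ and the only lattice point it contains other than its vertices is the origin, which lies strictly in its interior. $\lceil q\rceil=\min\{a\in\mathbb{Z}: a\ge q\}$. *)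

theory Defs
  imports "HOL-Analysis.Analysis"
begin

definition rvec :: "int^3 \<Rightarrow> real^3" where
  "rvec v = (\<chi> i. of_int (v $ i))"

definition lattice_point :: "real^3 \<Rightarrow> bool" where
  "lattice_point p \<longleftrightarrow> (\<forall>i. p $ i \<in> \<int>)"

definition fano_tetrahedron :: "(nat \<Rightarrow> int^3) \<Rightarrow> bool" where
  "fano_tetrahedron x \<longleftrightarrow>
     (let V = rvec ` x ` {1..4} in
        card V = 4 \<and> \<not> affine_dependent V \<and>
        0 \<in> interior (convex hull V) \<and>
        (\<forall>p \<in> convex hull V. lattice_point p \<longrightarrow> p \<in> V \<or> p = 0))"

end

theory Submission
  imports Defs
begin

(* Write S(k) for the sum of the ceilings and c_i = ceil(k l_i / h) - k l_i / h, which lies in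
   [0, 1). Since sum_i l_i x_i = 0, the point sum_i c_i x_i = sum_i ceil(k l_i / h) x_i is a lattice
   point, and sum_i c_i = S(k) - k. If S(k) <= k + 1, then either all c_i vanish, or the point lies
   in the tetrahedron and is therefore a vertex (impossible, as c_i < 1) or the origin (so
   c_i = l_i / h). Either way c_i = t l_i / h with t in {0, 1}, so h divides (k + t) l_i for all i
   and hence, the l_i being coprime, h divides k + t. Thus S(k) >= k + 2 whenever h divides
   neither k nor k + 1. On the other hand ceil(a) + ceil(m - a) <= m + 1 for an integer m, with
   equality m when a is an integer, so S(k) + S(h - k) <= h + 4, which forces (i). If d = gcd(l_j, h) > 1, then for
   k = h / d the j-th term is integral, so S(k) + S(h - k) <= h + 3, contradicting (i). *)

lemma affine_independent_coeffs_eq: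
  fixes y :: "'i \<Rightarrow> 'a::real_vector"
  assumes "finite I" and inj: "inj_on y I" and indep: "\<not> affine_dependent (y ` I)"
    and sums: "sum a I = sum b I" and combs: "(\<Sum>i\<in>I. a i *\<^sub>R y i) = (\<Sum>i\<in>I. b i *\<^sub>R y i)"
    and "j \<in> I"
  shows "a j = b j"
proof (rule ccontr)
  assume "a j \<noteq> b j"
  define U where "U v = a (inv_into I y v) - b (inv_into I y v)" for v
  have U: "U (y i) = a i - b i" if "i \<in> I" for i
    using inv_into_f_f[OF inj that] by (simp add: U_def)
  have "sum U (y ` I) = 0"
    using sums by (simp add: sum.reindex[OF inj] U sum_subtractf)
  moreover have "(\<Sum>v\<in>y ` I. U v *\<^sub>R v) = 0"
    using combs by (simp add: sum.reindex[OF inj] U scaleR_left_diff_distrib sum_subtractf)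
  moreover have "U (y j) \<noteq> 0"
    using \<open>j \<in> I\<close> \<open>a j \<noteq> b j\<close> by (simp add: U)
  ultimately have "affine_dependent (y ` I)"
    using \<open>finite I\<close> \<open>j \<in> I\<close> by (subst affine_dependent_explicit_finite) auto
  with indep show False ..
qed

lemma mem_convex_hull_image_iff:
  fixes y :: "'i \<Rightarrow> 'a::real_vector"
  assumes "finite I" and inj: "inj_on y I"
  shows "p \<in> convex hull (y ` I) \<longleftrightarrow>
    (\<exists>g. (\<forall>i\<in>I. 0 \<le> g i) \<and> sum g I = 1 \<and> (\<Sum>i\<in>I. g i *\<^sub>R y i) = p)"
proof
  assume "p \<in> convex hull (y ` I)"
  then obtain u where "\<forall>v\<in>y ` I. 0 \<le> u v" "sum u (y ` I) = 1" "(\<Sum>v\<in>y ` I. u v *\<^sub>R v) = p"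
    using \<open>finite I\<close> by (auto simp: convex_hull_finite)
  then show "\<exists>g. (\<forall>i\<in>I. 0 \<le> g i) \<and> sum g I = 1 \<and> (\<Sum>i\<in>I. g i *\<^sub>R y i) = p"
    by (intro exI[of _ "u \<circ> y"]) (simp add: sum.reindex[OF inj])
next
  assume "\<exists>g. (\<forall>i\<in>I. 0 \<le> g i) \<and> sum g I = 1 \<and> (\<Sum>i\<in>I. g i *\<^sub>R y i) = p"
  then obtain g where g: "\<forall>i\<in>I. 0 \<le> g i" "sum g I = 1" and p: "p = (\<Sum>i\<in>I. g i *\<^sub>R y i)"
    by auto
  show "p \<in> convex hull (y ` I)"
    unfolding p by (rule convex_sum) (use \<open>finite I\<close> g in \<open>auto intro: hull_inc\<close>)
qed

lemma interior_convex_hull_coeff_pos: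
  fixes y :: "'i \<Rightarrow> 'a::euclidean_space"
  assumes "finite I" and inj: "inj_on y I" and indep: "\<not> affine_dependent (y ` I)"
    and p: "p \<in> interior (convex hull (y ` I))"
    and "sum g I = 1" and "(\<Sum>i\<in>I. g i *\<^sub>R y i) = p" and "j \<in> I"
  shows "g j > 0"
proof -
  obtain u where u: "\<forall>v\<in>y ` I. 0 < u v" "sum u (y ` I) = 1" "(\<Sum>v\<in>y ` I. u v *\<^sub>R v) = p"
  proof -
    have "p \<in> (if card (y ` I) \<le> DIM('a) then {} else
        {q. \<exists>u. (\<forall>v\<in>y ` I. 0 < u v) \<and> sum u (y ` I) = 1 \<and> (\<Sum>v\<in>y ` I. u v *\<^sub>R v) = q})"
      using p by (simp only: interior_convex_hull_explicit_minimal[OF indep])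
    then show thesis
      using that by (auto split: if_split_asm)
  qed
  have "g j = (u \<circ> y) j"
  proof (rule affine_independent_coeffs_eq[OF \<open>finite I\<close> inj indep _ _ \<open>j \<in> I\<close>])
    show "sum g I = sum (u \<circ> y) I"
      using u(2) \<open>sum g I = 1\<close> by (simp add: sum.reindex[OF inj])
    show "(\<Sum>i\<in>I. g i *\<^sub>R y i) = (\<Sum>i\<in>I. (u \<circ> y) i *\<^sub>R y i)"
      using u(3) \<open>(\<Sum>i\<in>I. g i *\<^sub>R y i) = p\<close> by (simp add: sum.reindex[OF inj])
  qed
  with u \<open>j \<in> I\<close> show ?thesis by simp
qed

lemma ceiling_add_ceiling_diff_le:
  fixes a :: real and n :: int
  shows "\<lceil>a\<rceil> + \<lceil>of_int n - a\<rceil> \<le> n + of_bool (a \<notin> \<int>)"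
proof -
  have reflect: "\<lceil>of_int n - a\<rceil> = n - \<lfloor>a\<rfloor>"
    by (metis ceiling_minus ceiling_add_of_int diff_conv_add_uminus add.commute)
  show ?thesis
  proof (cases "a \<in> \<int>")
    case True
    then show ?thesis
      using reflect by (auto elim!: Ints_cases)
  next
    case False
    then show ?thesis
      using reflect ceiling_diff_floor_le_1[of a] by simp
  qed
qed

lemma dvd_of_dvd_mult_Gcd_eq_1:
  fixes l :: "'i \<Rightarrow> nat" and d m :: int
  assumes gcd: "Gcd (l ` I) = 1" and dvd: "\<And>i. i \<in> I \<Longrightarrow> d dvd m * int (l i)"
  shows "d dvd m"
proof -
  have "d dvd Gcd ((*) m ` int ` l ` I)"
    using dvd by (auto intro: Gcd_greatest)
  also have "\<dots> = normalize (m * Gcd (int ` l ` I))"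
    by (rule Gcd_mult)
  also have "Gcd (int ` l ` I) = 1"
    using gcd by (metis Gcd_int_eq of_nat_1)
  finally show ?thesis by simp
qed

lemma member_lt_sum_nat:
  fixes l :: "'i \<Rightarrow> nat"
  assumes "finite I" and "i \<in> I" and "j \<in> I" and "i \<noteq> j" and "l i > 0"
  shows "l j < sum l I"
proof -
  have "l j < l j + l i"
    using \<open>l i > 0\<close> by simp
  also have "\<dots> \<le> l j + sum l (I - {j})"
    using assms by (intro add_left_mono member_le_sum) auto
  also have "\<dots> = sum l I"
    using \<open>finite I\<close> \<open>j \<in> I\<close> by (simp add: sum.remove)
  finally show ?thesis .
qed

lemma not_coprime_obtain_cofactor:
  fixes a h :: nat
  assumes "gcd a h \<noteq> 1" and "0 < a" and "a < h"
  obtains k where "2 \<le> k" and "k + 2 \<le> h" and "h dvd k * a"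
proof
  define d where "d = gcd a h"
  define k where "k = h div d"
  have "d \<noteq> 1" "d > 0"
    using assms by (simp_all add: d_def)
  then have "d \<ge> 2"
    by linarith
  have "d \<le> a"
    using \<open>0 < a\<close> by (simp add: d_def gcd_le1_nat)
  with \<open>a < h\<close> have "d < h"
    by simp
  have h_eq: "h = d * k"
    by (simp add: k_def d_def)
  have "k \<noteq> 0" "k \<noteq> 1"
    using h_eq \<open>d < h\<close> by auto
  then show "2 \<le> k"
    by linarith
  have "2 * k \<le> h"
    using h_eq \<open>d \<ge> 2\<close> by simp
  with \<open>2 \<le> k\<close> show "k + 2 \<le> h"
    by linarith
  have "d * k dvd a * k"
    by (intro mult_dvd_mono) (simp_all add: d_def)
  then show "h dvd k * a"
    by (simp add: h_eq mult.commute)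
qed

definition ceiling_sum :: "('i \<Rightarrow> nat) \<Rightarrow> 'i set \<Rightarrow> int \<Rightarrow> int" where
  "ceiling_sum l I \<kappa> = (\<Sum>i\<in>I. \<lceil>real_of_int \<kappa> * real (l i) / real (sum l I)\<rceil>)"

definition ceiling_residual :: "('i \<Rightarrow> nat) \<Rightarrow> 'i set \<Rightarrow> int \<Rightarrow> 'i \<Rightarrow> real" where
  "ceiling_residual l I \<kappa> i =
    of_int \<lceil>real_of_int \<kappa> * real (l i) / real (sum l I)\<rceil>
      - real_of_int \<kappa> * real (l i) / real (sum l I)"

lemma ceiling_residual_bounds: "0 \<le> ceiling_residual l I \<kappa> i \<and> ceiling_residual l I \<kappa> i < 1"
  using ceiling_correct[of "real_of_int \<kappa> * real (l i) / real (sum l I)"]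
  by (auto simp: ceiling_residual_def)

lemma sum_ceiling_residual:
  assumes "finite I" and "sum l I > 0"
  shows "sum (ceiling_residual l I \<kappa>) I = of_int (ceiling_sum l I \<kappa> - \<kappa>)"
proof -
  define h where "h = sum l I"
  have "h > 0"
    using \<open>sum l I > 0\<close> by (simp add: h_def)
  have "(\<Sum>i\<in>I. real_of_int \<kappa> * real (l i) / real h) = real_of_int \<kappa> * real h / real h"
    by (simp add: h_def sum_divide_distrib sum_distrib_left)
  also have "\<dots> = real_of_int \<kappa>"
    using \<open>h > 0\<close> by simp
  finally show ?thesis
    by (simp add: ceiling_residual_def ceiling_sum_def sum_subtractf h_def)
qed

lemma dvd_of_ceiling_residual_eq:
  assumes gcd: "Gcd (l ` I) = 1" and pos: "sum l I > 0"
    and residual: "\<And>i. i \<in> I \<Longrightarrow>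
      ceiling_residual l I \<kappa> i = real_of_int t * real (l i) / real (sum l I)"
  shows "int (sum l I) dvd \<kappa> + t"
proof (rule dvd_of_dvd_mult_Gcd_eq_1[OF gcd])
  fix i
  assume "i \<in> I"
  define h where "h = sum l I"
  have "h > 0"
    using pos by (simp add: h_def)
  define C where "C = \<lceil>real_of_int \<kappa> * real (l i) / real h\<rceil>"
  have "real_of_int C = real_of_int (\<kappa> + t) * real (l i) / real h"
    using residual[OF \<open>i \<in> I\<close>] unfolding ceiling_residual_def h_def[symmetric]
    by (simp add: C_def add_divide_distrib distrib_right)
  then have "real_of_int (C * int h) = real_of_int ((\<kappa> + t) * int (l i))"
    using \<open>h > 0\<close> by (simp add: field_simps)
  then have "(\<kappa> + t) * int (l i) = int h * C"
    by (simp only: of_int_eq_iff mult.commute)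
  then show "int (sum l I) dvd (\<kappa> + t) * int (l i)"
    unfolding h_def ..
qed

lemma ceiling_sum_reflect_le:
  assumes "finite I" and pos: "sum l I > 0"
  shows "ceiling_sum l I \<kappa> + ceiling_sum l I (int (sum l I) - \<kappa>)
    \<le> int (sum l I) + int (card {i\<in>I. \<not> int (sum l I) dvd \<kappa> * int (l i)})"
proof -
  define h where "h = sum l I"
  have "h > 0" using pos by (simp add: h_def)
  have term_le: "\<lceil>real_of_int \<kappa> * real (l i) / real h\<rceil>
      + \<lceil>real_of_int (int h - \<kappa>) * real (l i) / real h\<rceil>
      \<le> int (l i) + of_bool (\<not> int h dvd \<kappa> * int (l i))" for i
  proof -
    have reflect: "real_of_int (int h - \<kappa>) * real (l i) / real h
        = of_int (int (l i)) - real_of_int \<kappa> * real (l i) / real h"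
      using \<open>h > 0\<close> by (simp add: field_simps)
    have "real_of_int \<kappa> * real (l i) / real h \<in> \<int>" if "int h dvd \<kappa> * int (l i)"
      using of_int_divide_in_Ints[OF that, where 'a = real] by simp
    then show ?thesis
      using ceiling_add_ceiling_diff_le[of "real_of_int \<kappa> * real (l i) / real h" "int (l i)"]
      unfolding reflect by (auto simp: of_bool_def split: if_splits)
  qed
  have "ceiling_sum l I \<kappa> + ceiling_sum l I (int h - \<kappa>)
      \<le> (\<Sum>i\<in>I. int (l i) + of_bool (\<not> int h dvd \<kappa> * int (l i)))"
    unfolding ceiling_sum_def h_def[symmetric] sum.distrib[symmetric] by (rule sum_mono) (rule term_le)
  also have "\<dots> = int h + int (card {i\<in>I. \<not> int h dvd \<kappa> * int (l i)})"
    using \<open>finite I\<close> by (simp add: sum.distrib h_def Int_def)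
  finally show ?thesis by (simp add: h_def)
qed

lemma lattice_point_int_combination:
  assumes "\<And>i. i \<in> I \<Longrightarrow> lattice_point (y i)"
  shows "lattice_point (\<Sum>i\<in>I. real_of_int (C i) *\<^sub>R y i)"
  using assms by (auto simp: lattice_point_def intro!: Ints_sum Ints_mult)

locale fano_weights =
  fixes I :: "'i set" and y :: "'i \<Rightarrow> real^3" and l :: "'i \<Rightarrow> nat"
  assumes inj: "inj_on y I"
    and indep: "\<not> affine_dependent (y ` I)"
    and lattice_vertices: "\<And>i. i \<in> I \<Longrightarrow> lattice_point (y i)"
    and lattice_hull:
      "\<And>p. p \<in> convex hull (y ` I) \<Longrightarrow> lattice_point p \<Longrightarrow> p \<in> y ` I \<or> p = 0"
    and balanced: "(\<Sum>i\<in>I. real (l i) *\<^sub>R y i) = 0"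
    and coprime: "Gcd (l ` I) = 1"
begin

lemma finite_index: "finite I"
  using aff_independent_finite[OF indep] inj by (simp add: finite_image_iff)

lemma weight_sum_pos: "sum l I > 0"
proof (rule ccontr)
  assume "\<not> sum l I > 0"
  then have "l ` I \<subseteq> {0}"
    using finite_index by auto
  then have "Gcd (l ` I) = 0"
    by simp
  with coprime show False
    by simp
qed

lemma origin_barycentric:
  shows "(\<Sum>i\<in>I. real (l i) / real (sum l I)) = 1"
    and "(\<Sum>i\<in>I. (real (l i) / real (sum l I)) *\<^sub>R y i) = 0"
proof -
  have "real (sum l I) > 0"
    using weight_sum_pos of_nat_0_less_iff by blast
  then show "(\<Sum>i\<in>I. real (l i) / real (sum l I)) = 1"
    by (simp add: sum_divide_distrib[symmetric])
  have "(\<Sum>i\<in>I. (real (l i) / real (sum l I)) *\<^sub>R y i)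
      = (1 / real (sum l I)) *\<^sub>R (\<Sum>i\<in>I. real (l i) *\<^sub>R y i)"
    by (simp add: scaleR_sum_right)
  then show "(\<Sum>i\<in>I. (real (l i) / real (sum l I)) *\<^sub>R y i) = 0"
    using balanced by simp
qed

lemma weight_pos:
  assumes "0 \<in> interior (convex hull (y ` I))" and "j \<in> I"
  shows "l j > 0"
  using interior_convex_hull_coeff_pos[OF finite_index inj indep assms(1) origin_barycentric assms(2)]
  by (simp add: zero_less_divide_iff)

lemma fractional_coeffs_eq_weights:
  assumes frac: "\<And>i. i \<in> I \<Longrightarrow> 0 \<le> c i \<and> c i < 1" and sum1: "sum c I = 1"
    and lattice: "lattice_point (\<Sum>i\<in>I. c i *\<^sub>R y i)" and "j \<in> I"
  shows "c j = real (l j) / real (sum l I)"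
proof -
  let ?p = "\<Sum>i\<in>I. c i *\<^sub>R y i"
  have "?p \<in> convex hull (y ` I)"
    using frac sum1 by (auto simp: mem_convex_hull_image_iff[OF finite_index inj])
  then consider m where "m \<in> I" "?p = y m" | "?p = 0"
    using lattice_hull lattice by blast
  then show ?thesis
  proof cases
    case 1
    have "c m = of_bool (m = m)"
    proof (rule affine_independent_coeffs_eq[where b = "\<lambda>i. of_bool (i = m)",
          OF finite_index inj indep _ _ \<open>m \<in> I\<close>])
      show "sum c I = (\<Sum>i\<in>I. of_bool (i = m))"
        using sum1 \<open>m \<in> I\<close> finite_index by simp
      show "?p = (\<Sum>i\<in>I. of_bool (i = m) *\<^sub>R y i)"
        using 1 finite_index by (simp add: of_bool_def if_distrib[of "\<lambda>r. r *\<^sub>R _"] cong: if_cong)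
    qed
    with frac[OF \<open>m \<in> I\<close>] show ?thesis by simp
  next
    case 2
    show ?thesis
      using affine_independent_coeffs_eq[where b = "\<lambda>i. real (l i) / real (sum l I)",
          OF finite_index inj indep _ _ \<open>j \<in> I\<close>] sum1 2 origin_barycentric by simp
  qed
qed

lemma lattice_point_ceiling_residual:
  "lattice_point (\<Sum>i\<in>I. ceiling_residual l I \<kappa> i *\<^sub>R y i)"
proof -
  define C where "C i = \<lceil>real_of_int \<kappa> * real (l i) / real (sum l I)\<rceil>" for i
  have "(\<Sum>i\<in>I. (real_of_int \<kappa> * real (l i) / real (sum l I)) *\<^sub>R y i)
      = (real_of_int \<kappa> / real (sum l I)) *\<^sub>R (\<Sum>i\<in>I. real (l i) *\<^sub>R y i)"
    by (simp add: scaleR_sum_right)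
  then have "(\<Sum>i\<in>I. ceiling_residual l I \<kappa> i *\<^sub>R y i) = (\<Sum>i\<in>I. real_of_int (C i) *\<^sub>R y i)"
    using balanced by (simp add: ceiling_residual_def C_def scaleR_left_diff_distrib sum_subtractf)
  then show ?thesis
    using lattice_vertices by (simp add: lattice_point_int_combination)
qed

lemma ceiling_sum_ge:
  assumes "\<not> int (sum l I) dvd \<kappa>" and "\<not> int (sum l I) dvd \<kappa> + 1"
  shows "\<kappa> + 2 \<le> ceiling_sum l I \<kappa>"
proof (rule ccontr)
  define c where "c = ceiling_residual l I \<kappa>"
  define t where "t = ceiling_sum l I \<kappa> - \<kappa>"
  assume "\<not> \<kappa> + 2 \<le> ceiling_sum l I \<kappa>"
  then have "t < 2"
    by (simp add: t_def)
  have sum_c: "sum c I = real_of_int t"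
    using sum_ceiling_residual[OF finite_index weight_sum_pos] by (simp add: c_def t_def)
  moreover have frac: "0 \<le> c i \<and> c i < 1" for i
    using ceiling_residual_bounds by (simp add: c_def)
  ultimately have "0 \<le> t"
    using sum_nonneg[of I c] by simp
  with \<open>t < 2\<close> have "t = 0 \<or> t = 1"
    by linarith
  have "c i = real_of_int t * real (l i) / real (sum l I)" if "i \<in> I" for i
    using \<open>t = 0 \<or> t = 1\<close>
  proof
    assume "t = 0"
    then show ?thesis
      using sum_c frac finite_index that by (simp add: sum_nonneg_eq_0_iff)
  next
    assume "t = 1"
    moreover have "lattice_point (\<Sum>i\<in>I. c i *\<^sub>R y i)"
      using lattice_point_ceiling_residual by (simp add: c_def)
    ultimately show ?thesis
      using fractional_coeffs_eq_weights[OF frac _ _ that] sum_c by simp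
  qed
  then have "int (sum l I) dvd \<kappa> + t"
    using dvd_of_ceiling_residual_eq[OF coprime weight_sum_pos] by (simp add: c_def)
  with \<open>t = 0 \<or> t = 1\<close> assms show False
    by auto
qed

lemma ceiling_sum_eq:
  assumes "card I = 4" and "2 \<le> \<kappa>" and "\<kappa> \<le> int (sum l I) - 2"
  shows "ceiling_sum l I \<kappa> = \<kappa> + 2"
proof -
  define h where "h = int (sum l I)"
  have not_dvd: "\<not> h dvd m" if "0 < m" "m < h" for m
    using that zdvd_not_zless by blast
  have "\<kappa> + 2 \<le> ceiling_sum l I \<kappa>"
    using assms not_dvd by (intro ceiling_sum_ge) (simp_all add: h_def)
  moreover have "h - \<kappa> + 2 \<le> ceiling_sum l I (h - \<kappa>)"
    using assms not_dvd by (intro ceiling_sum_ge) (simp_all add: h_def)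
  moreover have "card {i\<in>I. \<not> h dvd \<kappa> * int (l i)} \<le> card I"
    using finite_index by (intro card_mono) auto
  ultimately show ?thesis
    using ceiling_sum_reflect_le[OF finite_index weight_sum_pos, of \<kappa>] assms(1)
    by (simp add: h_def)
qed

lemma gcd_weight_eq_1:
  assumes card: "card I = 4" and pos: "\<And>i. i \<in> I \<Longrightarrow> l i > 0" and "j \<in> I"
  shows "gcd (l j) (sum l I) = 1"
proof (rule ccontr)
  define h where "h = sum l I"
  assume "gcd (l j) (sum l I) \<noteq> 1"
  have "card (I - {j}) = 3"
    using card \<open>j \<in> I\<close> by (simp add: card_Diff_singleton)
  then have "I - {j} \<noteq> {}"
    by force
  then obtain i where "i \<in> I" "i \<noteq> j"
    by blast
  then have "l j < h"
    using member_lt_sum_nat[OF finite_index _ \<open>j \<in> I\<close> _ pos] by (simp add: h_def)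
  moreover have "gcd (l j) h \<noteq> 1"
    using \<open>gcd (l j) (sum l I) \<noteq> 1\<close> by (simp add: h_def)
  ultimately obtain k where k: "2 \<le> k" "k + 2 \<le> h" "h dvd k * l j"
    using not_coprime_obtain_cofactor pos[OF \<open>j \<in> I\<close>] by blast
  then have "int h dvd int k * int (l j)"
    by (metis of_nat_dvd_iff of_nat_mult)
  then have "{i\<in>I. \<not> int h dvd int k * int (l i)} \<subseteq> I - {j}"
    by auto
  then have "card {i\<in>I. \<not> int h dvd int k * int (l i)} \<le> card (I - {j})"
    using finite_index by (intro card_mono) auto
  then have "card {i\<in>I. \<not> int h dvd int k * int (l i)} \<le> 3"
    using \<open>card (I - {j}) = 3\<close> by simp
  moreover have range: "2 \<le> int k" "int k \<le> int h - 2"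
    using k by linarith+
  then have "ceiling_sum l I (int k) = int k + 2"
    using ceiling_sum_eq[OF card] by (simp add: h_def)
  moreover have "ceiling_sum l I (int h - int k) = int h - int k + 2"
    using ceiling_sum_eq[OF card] range by (simp add: h_def)
  ultimately show False
    using ceiling_sum_reflect_le[OF finite_index weight_sum_pos, of "int k"] by (simp add: h_def)
qed

end

lemma rvec_int_combination:
  "rvec (\<Sum>i\<in>I. c i *s v i) = (\<Sum>i\<in>I. real_of_int (c i) *\<^sub>R rvec (v i))"
  by (simp add: rvec_def vec_eq_iff sum_component)

lemma lattice_point_rvec: "lattice_point (rvec v)"
  by (simp add: rvec_def lattice_point_def)

theorem corollary2p6:
  fixes x :: "nat \<Rightarrow> int^3" and l :: "nat \<Rightarrow> nat" and h :: nat
  assumes "fano_tetrahedron x"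
    and "Gcd (l ` {1..4}) = 1"
    and "h = (\<Sum>i=1..4. l i)"
    and "(\<Sum>i=1..4. int (l i) *s x i) = 0"
  shows "(\<forall>\<kappa>::int. 2 \<le> \<kappa> \<and> \<kappa> \<le> int h - 2 \<longrightarrow>
            (\<Sum>i=1..4. \<lceil>real_of_int \<kappa> * real (l i) / real h\<rceil>) = \<kappa> + 2)
       \<and> (\<forall>i\<in>{1..4}. gcd (l i) h = 1)"
proof -
  define y where "y i = rvec (x i)" for i
  have "rvec ` x ` {1..4} = y ` {1..4}"
    by (auto simp: y_def)
  with assms(1) have card: "card (y ` {1..4}) = 4" and indep: "\<not> affine_dependent (y ` {1..4})"
    and interior: "0 \<in> interior (convex hull (y ` {1..4}))"
    and hull: "\<forall>p\<in>convex hull (y ` {1..4}). lattice_point p \<longrightarrow> p \<in> y ` {1..4} \<or> p = 0"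
    by (simp_all add: fano_tetrahedron_def Let_def)
  have "(\<Sum>i=1..4. real (l i) *\<^sub>R y i) = rvec (\<Sum>i=1..4. int (l i) *s x i)"
    by (simp add: rvec_int_combination y_def)
  also have "\<dots> = 0"
    unfolding assms(4) by (simp add: rvec_def vec_eq_iff)
  finally have balanced: "(\<Sum>i=1..4. real (l i) *\<^sub>R y i) = 0" .
  interpret fano_weights "{1..4}" y l
    using card indep hull balanced assms(2)
    by unfold_locales (auto simp: y_def lattice_point_rvec inj_on_iff_eq_card)
  have "card {1..4::nat} = 4"
    by simp
  then show ?thesis
    using ceiling_sum_eq gcd_weight_eq_1 weight_pos[OF interior] assms(3)
    by (auto simp: ceiling_sum_def)
qed

end
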